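(* Let $k \geq \ell \ge 1$, $n \geq k+\ell$, and let $\mathcal F \subset \binom{[n]}{k}$, $\mathcal G \subset \binom{[n]}{\ell}$ be initial, cross-intersecting families. For $G \in \mathcal G$ let $p(G)$ be the largest integer $p \in \{0,1,\dots,\ell\}$ such that $|G \cap [2p+k-\ell]| \geq p$. Assume that if $k=\ell$ then $p(G) \geq 1$ for all $G \in \mathcal G$. Define $\varphi(G) = G \,\Delta\, [2p(G)+k-\ell]$ (symmetric difference). Then: (i) $|\varphi(G)| = k$ for all $G \in \mathcal G$; (ii) $\varphi$ is injective on $\mathcal G$ and $\varphi(G) \notin \mathcal F$ for all $G \in \mathcal G$; (iii) $\varphi(G) \cap [\ell] \neq \emptyset$ for every $G \in \mathcal G$ with $G \neq [\ell]$.
   Context: $[m]=\{1,\dots,m\}$ ($[0]=\emptyset$). For $r$-sets $A=\{x_1<\dots<x_r\}$, $B=\{y_1<\dots<y_r\}$, $A\prec B$ means $x_i\le y_i$ for all $i$; a family of $r$-sets is initial if $A\prec B\in\mathcal F$ implies $A\in\mathcal F$. Families are cross-intersecting if every member of one meets every member of the other. *)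

theory Defs
  imports Main
begin

definition rsets :: "nat \<Rightarrow> nat \<Rightarrow> nat set set" where
  "rsets n r = {A. A \<subseteq> {1..n} \<and> card A = r}"

definition shift_prec :: "nat set \<Rightarrow> nat set \<Rightarrow> bool" where
  "shift_prec A B \<longleftrightarrow> finite A \<and> finite B \<and> card A = card B \<and>
     (\<forall>i < card A. sorted_list_of_set A ! i \<le> sorted_list_of_set B ! i)"

definition initial :: "nat \<Rightarrow> nat \<Rightarrow> nat set set \<Rightarrow> bool" where
  "initial n r F \<longleftrightarrow> (\<forall>A B. A \<in> rsets n r \<and> B \<in> F \<and> shift_prec A B \<longrightarrow> A \<in> F)"

definition cross_intersecting :: "'a set set \<Rightarrow> 'a set set \<Rightarrow> bool" where
  "cross_intersecting F G \<longleftrightarrow> (\<forall>A\<in>F. \<forall>B\<in>G. A \<inter> B \<noteq> {})"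

definition pG :: "nat \<Rightarrow> nat \<Rightarrow> nat set \<Rightarrow> nat" where
  "pG k l G = Max {p. p \<le> l \<and> card (G \<inter> {1..2*p+k-l}) \<ge> p}"

definition phi :: "nat \<Rightarrow> nat \<Rightarrow> nat set \<Rightarrow> nat set" where
  "phi k l G = (let S = {1..2 * pG k l G + k - l} in (G - S) \<union> (S - G))"

end

theory Submission
  imports Defs
begin

(* Write p = p(G) and m = 2p + k - l. Maximality of p forces |G \<inter> [m]| = p, so \<phi>(G) has
   (l - p) + (m - p) = k elements, and |\<phi>(G) \<inter> [2q + k - l]| equals q + k - l for q = p but is
   smaller for every q > p; hence \<phi>(G) determines p, and with it G.
   Maximality of p also gives 2|G \<inter> [s]| + k - l \<le> s for m \<le> s < k + l, which says exactly
   that the k smallest elements of [n] - G form a set A \<prec> \<phi>(G). Since F is initial,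
   \<phi>(G) \<in> F would put A into F, although A misses G. *)

lemma nth_sorted_list_of_set_le_iff:
  fixes A :: "'a::linorder set"
  assumes "finite A" and "i < card A"
  shows "sorted_list_of_set A ! i \<le> s \<longleftrightarrow> i < card (A \<inter> {..s})"
proof -
  define xs where "xs = sorted_list_of_set A"
  have xs: "sorted xs" "distinct xs" "set xs = A" "length xs = card A"
    using assms(1) by (auto simp: xs_def)
  show ?thesis unfolding xs_def[symmetric]
  proof
    assume le: "xs ! i \<le> s"
    have "nth xs ` {..i} \<subseteq> A \<inter> {..s}"
    proof
      fix y assume "y \<in> nth xs ` {..i}"
      then obtain j where "j \<le> i" "y = xs ! j" by auto
      then show "y \<in> A \<inter> {..s}"
        using sorted_nth_mono[OF xs(1), of j i] le assms(2) xs(3,4) by auto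
    qed
    moreover have "card (nth xs ` {..i}) = Suc i"
      using xs(2,4) assms(2) by (subst card_image) (auto simp: inj_on_def nth_eq_iff_index_eq)
    ultimately show "i < card (A \<inter> {..s})"
      using card_mono[of "A \<inter> {..s}" "nth xs ` {..i}"] assms(1) by simp
  next
    assume lt: "i < card (A \<inter> {..s})"
    show "xs ! i \<le> s"
    proof (rule ccontr)
      assume "\<not> xs ! i \<le> s"
      have "A \<inter> {..s} \<subseteq> nth xs ` {..<i}"
      proof
        fix y assume y: "y \<in> A \<inter> {..s}"
        then obtain j where j: "j < card A" "y = xs ! j"
          using xs(3,4) by (metis IntD1 in_set_conv_nth)
        have "j < i"
        proof (rule ccontr)
          assume "\<not> j < i"
          then have "xs ! i \<le> xs ! j" using sorted_nth_mono[OF xs(1)] j xs(4) by simp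
          then show False using y j \<open>\<not> xs ! i \<le> s\<close> by auto
        qed
        then show "y \<in> nth xs ` {..<i}" using j by auto
      qed
      then have "card (A \<inter> {..s}) \<le> card (nth xs ` {..<i})"
        by (rule card_mono[rotated]) simp
      also have "\<dots> \<le> i" using card_image_le[of "{..<i}" "nth xs"] by simp
      finally show False using lt by simp
    qed
  qed
qed

lemma shift_precI_card_atMost:
  assumes "finite A" and "finite B" and "card A = card B"
    and "\<And>s. card (B \<inter> {..s}) \<le> card (A \<inter> {..s})"
  shows "shift_prec A B"
  unfolding shift_prec_def
proof (intro conjI allI impI assms(1-3))
  fix i assume i: "i < card A"
  let ?y = "sorted_list_of_set B ! i"
  have "i < card (B \<inter> {..?y})"
    using nth_sorted_list_of_set_le_iff[OF assms(2), of i ?y] i assms(3) by simp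
  also have "\<dots> \<le> card (A \<inter> {..?y})" by (rule assms(4))
  finally show "sorted_list_of_set A ! i \<le> ?y"
    using nth_sorted_list_of_set_le_iff[OF assms(1) i] by simp
qed

lemma nat_intermediate_value:
  fixes f :: "nat \<Rightarrow> nat"
  assumes steps: "\<And>s. f (Suc s) \<le> f s + 1"
    and "u \<le> v" and "f u \<le> m" and "m \<le> f v"
  shows "\<exists>t. u \<le> t \<and> t \<le> v \<and> f t = m"
  using assms(2,4)
proof (induction v)
  case 0
  then show ?case using \<open>f u \<le> m\<close> by auto
next
  case (Suc v)
  show ?case
  proof (cases "u = Suc v")
    case True
    then show ?thesis using \<open>f u \<le> m\<close> Suc.prems by auto
  next
    case False
    then have "u \<le> v" using Suc.prems by simp
    show ?thesis
    proof (cases "m \<le> f v")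
      case True
      then show ?thesis using Suc.IH \<open>u \<le> v\<close> le_SucI by blast
    next
      case False
      then have "f (Suc v) = m" using steps[of v] Suc.prems by simp
      then show ?thesis using \<open>u \<le> v\<close> by (intro exI[of _ "Suc v"]) auto
    qed
  qed
qed

lemma exists_card_atLeastAtMost_diff:
  assumes "finite X"
  shows "\<exists>t \<le> card X + j. card ({1..t} - X) = j"
proof -
  define f where "f t = card ({1..t} - X)" for t
  have "f (Suc t) \<le> f t + 1" for t
  proof -
    have "{1..Suc t} - X \<subseteq> insert (Suc t) ({1..t} - X)" by auto
    then have "f (Suc t) \<le> card (insert (Suc t) ({1..t} - X))"
      unfolding f_def by (rule card_mono[rotated]) simp
    also have "\<dots> \<le> f t + 1" unfolding f_def by (simp add: card_insert_if)
    finally show ?thesis .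
  qed
  moreover have "j \<le> f (card X + j)"
  proof -
    have "card {1..card X + j} \<le> card (({1..card X + j} - X) \<union> X)"
      using assms by (intro card_mono) auto
    also have "\<dots> \<le> card ({1..card X + j} - X) + card X" by (rule card_Un_le)
    finally have "card {1..card X + j} \<le> card ({1..card X + j} - X) + card X" .
    then show ?thesis unfolding f_def by simp
  qed
  ultimately show ?thesis
    using nat_intermediate_value[of f 0 "card X + j" j] by (auto simp: f_def)
qed

lemma card_sym_diff:
  assumes "finite A" and "finite B"
  shows "card (sym_diff A B) + 2 * card (A \<inter> B) = card A + card B"
proof -
  have "card (A \<union> B) = card (sym_diff A B \<union> (A \<inter> B))"
    by (rule arg_cong[where f = card]) blast
  also have "\<dots> = card (sym_diff A B) + card (A \<inter> B)"
    by (rule card_Un_disjoint) (use assms in auto)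
  finally have "card (A \<union> B) = card (sym_diff A B) + card (A \<inter> B)" .
  then show ?thesis using card_Un_Int[OF assms] by simp
qed

lemma card_sym_diff_Int:
  assumes "finite A" and "finite B" and "B \<subseteq> C"
  shows "card (sym_diff A B \<inter> C) + 2 * card (A \<inter> B) = card (A \<inter> C) + card B"
proof -
  have "sym_diff A B \<inter> C = sym_diff (A \<inter> C) B" and "A \<inter> C \<inter> B = A \<inter> B"
    using assms(3) by auto
  then show ?thesis using card_sym_diff[of "A \<inter> C" B] assms(1,2) by simp
qed

lemma pG_le_card:
  "pG k l X \<le> l \<and> pG k l X \<le> card (X \<inter> {1..2 * pG k l X + k - l})"
proof -
  let ?P = "{p. p \<le> l \<and> card (X \<inter> {1..2 * p + k - l}) \<ge> p}"
  have "finite ?P" by (rule finite_subset[of _ "{..l}"]) auto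
  moreover have "0 \<in> ?P" by simp
  ultimately have "Max ?P \<in> ?P" by (intro Max_in) auto
  then show ?thesis unfolding pG_def by simp
qed

lemma card_Int_gt_pG:
  assumes "pG k l X < q" and "q \<le> l"
  shows "card (X \<inter> {1..2 * q + k - l}) < q"
proof (rule ccontr)
  let ?P = "{p. p \<le> l \<and> card (X \<inter> {1..2 * p + k - l}) \<ge> p}"
  assume "\<not> ?thesis"
  then have "q \<in> ?P" using assms(2) by simp
  moreover have "finite ?P" by (rule finite_subset[of _ "{..l}"]) auto
  ultimately have "q \<le> pG k l X" unfolding pG_def by (rule Max_ge[rotated])
  then show False using assms(1) by simp
qed

lemma card_Int_pG:
  assumes "finite X" and "card X = l"
  shows "card (X \<inter> {1..2 * pG k l X + k - l}) = pG k l X"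
proof -
  let ?p = "pG k l X"
  have "card (X \<inter> {1..2 * ?p + k - l}) \<le> ?p"
  proof (cases "?p < l")
    case True
    have "card (X \<inter> {1..2 * ?p + k - l}) \<le> card (X \<inter> {1..2 * (?p + 1) + k - l})"
      using assms(1) by (intro card_mono) auto
    also have "\<dots> < ?p + 1" using card_Int_gt_pG[of k l X "?p + 1"] True by simp
    finally show ?thesis by simp
  next
    case False
    have "card (X \<inter> {1..2 * ?p + k - l}) \<le> card X" using assms(1) by (intro card_mono) auto
    then show ?thesis using False assms(2) pG_le_card[of k l X] by simp
  qed
  then show ?thesis using pG_le_card[of k l X] by simp
qed

lemma phi_eq: "phi k l X = sym_diff X {1..2 * pG k l X + k - l}"
  by (simp add: phi_def Let_def)

lemma card_phi:
  assumes "finite X" and "card X = l" and "l \<le> k"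
  shows "card (phi k l X) = k"
  using card_sym_diff[of X "{1..2 * pG k l X + k - l}"] card_Int_pG[OF assms(1,2), of k] assms
  by (simp add: phi_eq)

lemma card_phi_Int_pG:
  assumes "finite X" and "card X = l" and "l \<le> k"
  shows "card (phi k l X \<inter> {1..2 * pG k l X + k - l}) = pG k l X + k - l"
proof -
  let ?S = "{1..2 * pG k l X + k - l}"
  have "card (phi k l X \<inter> ?S) + 2 * card (X \<inter> ?S) = card (X \<inter> ?S) + card ?S"
    unfolding phi_eq by (rule card_sym_diff_Int) (use assms(1) in auto)
  then show ?thesis using card_Int_pG[OF assms(1,2), of k] assms(3) by simp
qed

lemma card_phi_Int_gt_pG:
  assumes "finite X" and "card X = l" and "l \<le> k" and "pG k l X < q" and "q \<le> l"
  shows "card (phi k l X \<inter> {1..2 * q + k - l}) < q + k - l"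
proof -
  let ?S = "{1..2 * pG k l X + k - l}" and ?T = "{1..2 * q + k - l}"
  have "card (phi k l X \<inter> ?T) + 2 * card (X \<inter> ?S) = card (X \<inter> ?T) + card ?S"
    unfolding phi_eq by (rule card_sym_diff_Int) (use assms(1,4) in auto)
  then show ?thesis
    using card_Int_pG[OF assms(1,2), of k] card_Int_gt_pG[OF assms(4,5)] assms(3) by simp
qed

lemma pG_eq_if_phi_eq:
  assumes "finite X" and "card X = l" and "finite Y" and "card Y = l" and "l \<le> k"
    and "phi k l X = phi k l Y"
  shows "pG k l X = pG k l Y"
proof -
  have "\<not> pG k l A < pG k l B"
    if "finite A" "card A = l" "finite B" "card B = l" "phi k l A = phi k l B" for A B
    using card_phi_Int_gt_pG[OF that(1,2) assms(5) _ pG_le_card[THEN conjunct1]]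
      card_phi_Int_pG[OF that(3,4) assms(5)] that(5)
    by fastforce
  then show ?thesis using assms by (metis linorder_neqE_nat)
qed

lemma inj_on_phi:
  assumes "l \<le> k"
  shows "inj_on (phi k l) {X. finite X \<and> card X = l}"
proof (rule inj_onI)
  fix X Y assume "X \<in> {X. finite X \<and> card X = l}" "Y \<in> {X. finite X \<and> card X = l}"
    and eq: "phi k l X = phi k l Y"
  then have "pG k l X = pG k l Y" using pG_eq_if_phi_eq assms by blast
  then have "sym_diff X S = sym_diff Y S" if "S = {1..2 * pG k l X + k - l}" for S
    using eq that by (simp add: phi_eq)
  then show "X = Y" by blast
qed

lemma card_Int_atLeastAtMost_le_half:
  assumes "finite X" and "card X = l" and "l \<le> k"
    and "2 * pG k l X + k - l \<le> s" and "s < l + k"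
  shows "2 * card (X \<inter> {1..s}) + (k - l) \<le> s"
proof -
  let ?p = "pG k l X" and ?q = "(s - (k - l) + 1) div 2"
  \<comment> \<open>the least q with s \<le> 2q + k - l\<close>
  show ?thesis
  proof (cases "?q \<le> ?p")
    case True
    then have "s = 2 * ?p + k - l" using assms(3,4) by linarith
    then show ?thesis using card_Int_pG[OF assms(1,2), of k] assms(3) by simp
  next
    case False
    have "s \<le> 2 * ?q + k - l" using assms(3,4) by linarith
    then have "card (X \<inter> {1..s}) \<le> card (X \<inter> {1..2 * ?q + k - l})"
      using assms(1) by (intro card_mono) auto
    also have "\<dots> < ?q" using card_Int_gt_pG[of k l X ?q] False assms(5) by linarith
    finally show ?thesis by linarith
  qed
qed

lemma exists_disjoint_shift_prec_phi:
  assumes "X \<subseteq> {1..n}" and "card X = l" and "l \<le> k" and "k + l \<le> n"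
  shows "\<exists>A \<in> rsets n k. A \<inter> X = {} \<and> shift_prec A (phi k l X)"
proof -
  have fin: "finite X" using assms(1) finite_subset by blast
  obtain t where t: "t \<le> l + k" "card ({1..t} - X) = k"
    using exists_card_atLeastAtMost_diff[OF fin, of k] assms(2) by blast
  define A where "A = {1..t} - X"
  \<comment> \<open>the k smallest elements outside X\<close>
  define m where "m = 2 * pG k l X + k - l"
  have "card (phi k l X \<inter> {..s}) \<le> card (A \<inter> {..s})" for s
  proof (cases "t \<le> s")
    case True
    then have "A \<inter> {..s} = A" by (auto simp: A_def)
    moreover have "card (phi k l X \<inter> {..s}) \<le> card (phi k l X)"
      using fin by (intro card_mono) (auto simp: phi_eq)
    ultimately show ?thesis using card_phi[OF fin assms(2,3)] t(2) by (simp add: A_def)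
  next
    case False
    have A_s: "A \<inter> {..s} = {1..s} - X" using False by (auto simp: A_def)
    have phi_s: "phi k l X \<inter> {..s} = phi k l X \<inter> {1..s}" using assms(1) by (auto simp: phi_eq)
    show ?thesis
    proof (cases "s \<le> m")
      case True
      then have "phi k l X \<inter> {1..s} = {1..s} - X" by (auto simp: phi_eq m_def)
      then show ?thesis using A_s phi_s by simp
    next
      case False
      have "card (phi k l X \<inter> {1..s}) + 2 * card (X \<inter> {1..m}) = card (X \<inter> {1..s}) + card {1..m}"
        unfolding phi_eq m_def[symmetric] by (rule card_sym_diff_Int) (use fin False in auto)
      moreover have "card (X \<inter> {1..m}) = pG k l X" unfolding m_def by (rule card_Int_pG[OF fin assms(2)])
      moreover have "2 * card (X \<inter> {1..s}) + (k - l) \<le> s"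
        using card_Int_atLeastAtMost_le_half[OF fin assms(2,3)] False \<open>\<not> t \<le> s\<close> t(1)
        unfolding m_def by simp
      moreover have "card ({1..s} - X) = s - card (X \<inter> {1..s})"
        by (simp add: card_Diff_subset_Int Int_commute)
      ultimately show ?thesis using A_s phi_s assms(3) by (simp add: m_def)
    qed
  qed
  then have "shift_prec A (phi k l X)"
    using shift_precI_card_atMost card_phi[OF fin assms(2,3)] fin t(2) by (simp add: A_def phi_eq)
  moreover have "A \<in> rsets n k" using t assms(4) by (auto simp: A_def rsets_def)
  ultimately show ?thesis by (auto simp: A_def)
qed

lemma phi_Int_atLeastAtMost_nonempty:
  assumes "finite X" and "card X = l" and "l \<le> k" and "X \<noteq> {1..l}"
    and "k = l \<Longrightarrow> 1 \<le> pG k l X"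
  shows "phi k l X \<inter> {1..l} \<noteq> {}"
proof
  assume disj: "phi k l X \<inter> {1..l} = {}"
  define m where "m = 2 * pG k l X + k - l"
  show False
  proof (cases "l \<le> m")
    case True
    have "{1..l} \<subseteq> X"
    proof
      fix x assume "x \<in> {1..l}"
      then have "x \<in> {1..m}" and "x \<notin> phi k l X" using True disj by auto
      then show "x \<in> X" by (auto simp: phi_eq m_def)
    qed
    then have "{1..l} = X" using card_subset_eq[OF assms(1)] assms(2) by simp
    then show False using assms(4) by simp
  next
    case False
    have "card ({1..m} - X) = pG k l X + k - l"
      using card_Int_pG[OF assms(1,2), of k] assms(3)
      by (simp add: card_Diff_subset_Int Int_commute m_def)
    also have "\<dots> > 0" using assms(3,5) by linarith
    finally obtain x where "x \<in> {1..m} - X" by (metis card.empty ex_in_conv less_irrefl)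
    then have "x \<in> phi k l X \<inter> {1..l}" using False by (auto simp: phi_eq m_def)
    then show False using disj by blast
  qed
qed

theorem lemma5p1:
  fixes n k l :: nat and F G :: "nat set set"
  assumes "1 \<le> l" and "l \<le> k" and "k + l \<le> n"
    and "F \<subseteq> rsets n k" and "G \<subseteq> rsets n l"
    and "initial n k F" and "initial n l G"
    and "cross_intersecting F G"
    and "k = l \<Longrightarrow> (\<forall>B\<in>G. pG k l B \<ge> 1)"
  shows "(\<forall>B\<in>G. card (phi k l B) = k)
    \<and> inj_on (phi k l) G \<and> (\<forall>B\<in>G. phi k l B \<notin> F)
    \<and> (\<forall>B\<in>G. B \<noteq> {1..l} \<longrightarrow> phi k l B \<inter> {1..l} \<noteq> {})"
proof -
  have G_sets: "X \<subseteq> {1..n} \<and> finite X \<and> card X = l" if "X \<in> G" for X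
    using assms(5) that by (auto simp: rsets_def intro: finite_subset)
  have "phi k l X \<notin> F" if "X \<in> G" for X
  proof
    assume "phi k l X \<in> F"
    obtain A where "A \<in> rsets n k" and "A \<inter> X = {}" and "shift_prec A (phi k l X)"
      using exists_disjoint_shift_prec_phi G_sets[OF \<open>X \<in> G\<close>] assms(2,3) by blast
    then have "A \<in> F" using assms(6) \<open>phi k l X \<in> F\<close> unfolding initial_def by blast
    then show False
      using assms(8) \<open>X \<in> G\<close> \<open>A \<inter> X = {}\<close> unfolding cross_intersecting_def by blast
  qed
  moreover have "inj_on (phi k l) G"
    using inj_on_phi[OF assms(2)] by (rule inj_on_subset) (use G_sets in blast)
  moreover have "card (phi k l X) = k" if "X \<in> G" for X
    using card_phi G_sets[OF that] assms(2) by blast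
  moreover have "phi k l X \<inter> {1..l} \<noteq> {}" if "X \<in> G" and "X \<noteq> {1..l}" for X
    using phi_Int_atLeastAtMost_nonempty G_sets[OF that(1)] assms(2,9) that by blast
  ultimately show ?thesis by blast
qed

end
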